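(* Let $K$ be an infinite field, let $n \ge 1$, and let $\mathcal{A} \subseteq (\mathbb{Z}_{\ge 0})^n$ be a support set that is homogeneous of some degree $d$ and contains the exponent vector of a power $x_i^d$ of some variable. Let $G \subseteq S_n$ be a subgroup acting transitively on the variables $x_1,\dots,x_n$. Then for general coefficients of $f \in K^{\mathcal{A}}$ with respect to $\mathcal{A}$, one has $\sqrt{(G.f)} = (x_1,\dots,x_n)$ in $K[x_1,\dots,x_n]$; in particular the common zero set of $G.f$ in $\overline{K}^n$ is $\{0\}$.
   Context: A support set is a non-empty finite subset $\mathcal{A}\subseteq(\mathbb{Z}_{\ge0})^n$; monomials of $K[x_1,\dots,x_n]$ are identified with their exponent vectors. $\mathcal{A}$ is homogeneous of degree $d$ if $\sum_i a_i = d$ for all $a\in\mathcal{A}$. $K^{\mathcal{A}}$ is identified with the set of polynomials $f$ whose support (set of monomials occurring with nonzero coefficient) is contained in $\mathcal{A}$. $S_n$ acts on $K[x_1,\dots,x_n]$ by $\sigma.x_i = x_{\sigma(i)}$; for a subgroup $G$, $G.f$ denotes the orbit of $f$ and $(G.f)$ the ideal it generates. An assertion holds "for general coefficients of $f$ with respect to $\mathcal{A}$" if the set of $f\in K^{\mathcal{A}}$ for which it holds contains a non-empty Zariski-open subset of $K^{\mathcal{A}}$. *)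

theory Defs
  imports Main "HOL-Library.Poly_Mapping"
begin

text \<open>Multivariate polynomials over 'a in the variables of type 'v are represented as
  finitely supported maps from exponent vectors (monomials) (finitely supported exponent maps) to coefficients.
  The convolution product of Poly_Mapping makes this the polynomial ring.\<close>

type_synonym ('v, 'a) mpoly = "('v \<Rightarrow>\<^sub>0 nat) \<Rightarrow>\<^sub>0 'a"

definition mmonom :: "('v \<Rightarrow>\<^sub>0 nat) \<Rightarrow> 'a::zero \<Rightarrow> ('v, 'a) mpoly" where
  "mmonom a c = Poly_Mapping.single a c"

definition mvar :: "'v \<Rightarrow> ('v, 'a::{zero,one}) mpoly" where
  "mvar i = Poly_Mapping.single (Poly_Mapping.single i 1) 1"

definition mdeg :: "('v \<Rightarrow>\<^sub>0 nat) \<Rightarrow> nat" where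
  "mdeg a = (\<Sum>i\<in>Poly_Mapping.keys a. Poly_Mapping.lookup a i)"

definition perm_mono :: "('v \<Rightarrow> 'v) \<Rightarrow> ('v \<Rightarrow>\<^sub>0 nat) \<Rightarrow> ('v \<Rightarrow>\<^sub>0 nat)" where
  "perm_mono \<sigma> a = (\<Sum>i\<in>Poly_Mapping.keys a. Poly_Mapping.single (\<sigma> i) (Poly_Mapping.lookup a i))"

definition perm_poly :: "('v \<Rightarrow> 'v) \<Rightarrow> ('v, 'a::comm_monoid_add) mpoly \<Rightarrow> ('v, 'a) mpoly" where
  "perm_poly \<sigma> p = (\<Sum>a\<in>Poly_Mapping.keys p. Poly_Mapping.single (perm_mono \<sigma> a) (Poly_Mapping.lookup p a))"

definition meval :: "('w, 'a::comm_ring_1) mpoly \<Rightarrow> ('w \<Rightarrow> 'a) \<Rightarrow> 'a" where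
  "meval p x = (\<Sum>m\<in>Poly_Mapping.keys p. Poly_Mapping.lookup p m *
       (\<Prod>v\<in>Poly_Mapping.keys m. x v ^ Poly_Mapping.lookup m v))"

definition mvars :: "('w, 'a::zero) mpoly \<Rightarrow> 'w set" where
  "mvars p = (\<Union>m\<in>Poly_Mapping.keys p. Poly_Mapping.keys m)"

text \<open>K^A: coefficient vectors indexed by the support set A (zero outside A).\<close>
definition coeff_space :: "('v \<Rightarrow>\<^sub>0 nat) set \<Rightarrow> (('v \<Rightarrow>\<^sub>0 nat) \<Rightarrow> 'a::zero) set" where
  "coeff_space A = {c. \<forall>a. a \<notin> A \<longrightarrow> c a = 0}"

definition poly_of_coeffs :: "('v \<Rightarrow>\<^sub>0 nat) set \<Rightarrow> (('v \<Rightarrow>\<^sub>0 nat) \<Rightarrow> 'a::comm_monoid_add) \<Rightarrow> ('v, 'a) mpoly" where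
  "poly_of_coeffs A c = (\<Sum>a\<in>A. mmonom a (c a))"

definition zariski_open_coeffs ::
  "('v \<Rightarrow>\<^sub>0 nat) set \<Rightarrow> (('v \<Rightarrow>\<^sub>0 nat) \<Rightarrow> 'a::comm_ring_1) set \<Rightarrow> bool" where
  "zariski_open_coeffs A U \<longleftrightarrow> U \<subseteq> coeff_space A \<and>
     (\<exists>P :: ('v \<Rightarrow>\<^sub>0 nat, 'a) mpoly set. (\<forall>h\<in>P. mvars h \<subseteq> A) \<and>
        coeff_space A - U = {c \<in> coeff_space A. \<forall>h\<in>P. meval h c = 0})"

definition general_coeffs ::
  "('v \<Rightarrow>\<^sub>0 nat) set \<Rightarrow> ((('v \<Rightarrow>\<^sub>0 nat) \<Rightarrow> 'a::comm_ring_1) \<Rightarrow> bool) \<Rightarrow> bool" where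
  "general_coeffs A Q \<longleftrightarrow> (\<exists>U. zariski_open_coeffs A U \<and> U \<noteq> {} \<and> (\<forall>c\<in>U. Q c))"

definition in_ideal_gen :: "('v, 'a::comm_ring_1) mpoly \<Rightarrow> ('v, 'a) mpoly set \<Rightarrow> bool" where
  "in_ideal_gen p F \<longleftrightarrow> (\<exists>S g. finite S \<and> S \<subseteq> F \<and> p = (\<Sum>q\<in>S. g q * q))"

definition in_radical_gen :: "('v, 'a::comm_ring_1) mpoly \<Rightarrow> ('v, 'a) mpoly set \<Rightarrow> bool" where
  "in_radical_gen p F \<longleftrightarrow> (\<exists>m::nat. in_ideal_gen (p ^ m) F)"

end

theory Submission
  imports Defs "Jordan_Normal_Form.Determinant"
begin

text \<open>Let \<open>f = \<Sum>\<^sub>a c\<^sub>a x\<^sup>a\<close> with \<open>x\<^sub>i\<^sup>d \<in> A\<close> and put \<open>N = n d\<close>. By pigeonhole every monomial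
  \<open>x\<^sup>\<gamma>\<close> of degree \<open>N\<close> is divisible by some \<open>x\<^sub>j\<^sup>d\<close>, and by transitivity \<open>x\<^sub>j\<^sup>d = \<sigma>.x\<^sub>i\<^sup>d\<close> for some
  \<open>\<sigma> \<in> G\<close>; choose one such product \<open>x\<^sup>\<gamma> = x\<^sup>\<beta> \<sigma>.x\<^sub>i\<^sup>d\<close> for each \<open>\<gamma>\<close>. The elements
  \<open>x\<^sup>\<beta> \<sigma>.f\<close> of \<open>(G.f)\<close> are forms of degree \<open>N\<close>, and their coefficient matrix with respect to
  the monomials of degree \<open>N\<close> is square, depends linearly on \<open>c\<close>, and is the identity at
  \<open>f = x\<^sub>i\<^sup>d\<close>. So its determinant is a polynomial in \<open>c\<close> that does not vanish identically,
  and wherever it is nonzero all monomials of degree \<open>N\<close>, hence \<open>p\<^sup>N\<close> for every \<open>p\<close> without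
  constant term, lie in \<open>(G.f)\<close>. Conversely no \<open>\<sigma>.f\<close> has a constant term. The argument works over
  any field and uses only the transitivity of \<open>G\<close>.\<close>

section \<open>Evaluation\<close>

definition monom_eval :: "('w \<Rightarrow>\<^sub>0 nat) \<Rightarrow> ('w \<Rightarrow> 'a::comm_ring_1) \<Rightarrow> 'a" where
  "monom_eval m x = (\<Prod>v\<in>Poly_Mapping.keys m. x v ^ Poly_Mapping.lookup m v)"

lemma poly_mapping_sum_single:
  "p = (\<Sum>a\<in>Poly_Mapping.keys p. Poly_Mapping.single a (Poly_Mapping.lookup p a))"
  by (rule poly_mapping_eqI) (simp add: lookup_sum lookup_single when_def in_keys_iff)

lemma monom_eval_superset:
  "finite S \<Longrightarrow> Poly_Mapping.keys m \<subseteq> S \<Longrightarrow>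
     monom_eval m x = (\<Prod>v\<in>S. x v ^ Poly_Mapping.lookup m v)"
  unfolding monom_eval_def by (rule prod.mono_neutral_left) (auto simp: in_keys_iff)

lemma monom_eval_add: "monom_eval (a + b) x = monom_eval a x * monom_eval b x"
proof -
  let ?S = "Poly_Mapping.keys a \<union> Poly_Mapping.keys b"
  have "monom_eval (a + b) x = (\<Prod>v\<in>?S. x v ^ Poly_Mapping.lookup (a + b) v)"
    using keys_add[of a b] by (intro monom_eval_superset) auto
  also have "\<dots> = (\<Prod>v\<in>?S. x v ^ Poly_Mapping.lookup a v) * (\<Prod>v\<in>?S. x v ^ Poly_Mapping.lookup b v)"
    by (simp add: lookup_add power_add prod.distrib)
  also have "\<dots> = monom_eval a x * monom_eval b x"
    using monom_eval_superset[of ?S a x] monom_eval_superset[of ?S b x] by simp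
  finally show ?thesis .
qed

lemma monom_eval_single [simp]: "monom_eval (Poly_Mapping.single v k) x = x v ^ k"
  by (cases "k = 0") (simp_all add: monom_eval_def)

lemma monom_eval_at_zero: "monom_eval m (\<lambda>_. 0) = (if m = 0 then 1 else 0)"
proof (cases "m = 0")
  case False
  then obtain v where "v \<in> Poly_Mapping.keys m" by (metis keys_eq_empty ex_in_conv)
  then show ?thesis
    using False unfolding monom_eval_def
    by (simp, intro prod_zero bexI[of _ v]) (auto simp: in_keys_iff zero_power)
qed (simp add: monom_eval_def)

lemma meval_eq_sum_monom_eval:
  "meval p x = (\<Sum>m\<in>Poly_Mapping.keys p. Poly_Mapping.lookup p m * monom_eval m x)"
  unfolding meval_def monom_eval_def ..

lemma meval_superset:
  "finite S \<Longrightarrow> Poly_Mapping.keys p \<subseteq> S \<Longrightarrow>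
     meval p x = (\<Sum>m\<in>S. Poly_Mapping.lookup p m * monom_eval m x)"
  unfolding meval_eq_sum_monom_eval by (rule sum.mono_neutral_left) (auto simp: in_keys_iff)

lemma meval_add: "meval (p + q) x = meval p x + meval q x"
proof -
  let ?S = "Poly_Mapping.keys p \<union> Poly_Mapping.keys q"
  have "meval (p + q) x = (\<Sum>m\<in>?S. Poly_Mapping.lookup (p + q) m * monom_eval m x)"
    using keys_add[of p q] by (intro meval_superset) auto
  also have "\<dots> = (\<Sum>m\<in>?S. Poly_Mapping.lookup p m * monom_eval m x)
                 + (\<Sum>m\<in>?S. Poly_Mapping.lookup q m * monom_eval m x)"
    by (simp add: lookup_add distrib_right sum.distrib)
  also have "\<dots> = meval p x + meval q x"
    using meval_superset[of ?S p x] meval_superset[of ?S q x] by simp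
  finally show ?thesis .
qed

lemma meval_zero [simp]: "meval 0 x = 0"
  by (simp add: meval_def)

lemma meval_single [simp]: "meval (Poly_Mapping.single m c) x = c * monom_eval m x"
  by (cases "c = 0") (simp_all add: meval_eq_sum_monom_eval)

lemma meval_sum: "meval (sum f S) x = (\<Sum>i\<in>S. meval (f i) x)"
  by (induction S rule: infinite_finite_induct) (simp_all add: meval_add)

lemma meval_mult: "meval (p * q) x = meval p x * meval q x"
proof -
  let ?P = "Poly_Mapping.keys p" and ?Q = "Poly_Mapping.keys q"
  have "p * q = (\<Sum>a\<in>?P. Poly_Mapping.single a (Poly_Mapping.lookup p a)) *
                (\<Sum>b\<in>?Q. Poly_Mapping.single b (Poly_Mapping.lookup q b))"
    by (simp flip: poly_mapping_sum_single)
  also have "\<dots> = (\<Sum>a\<in>?P. \<Sum>b\<in>?Q.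
      Poly_Mapping.single (a + b) (Poly_Mapping.lookup p a * Poly_Mapping.lookup q b))"
    by (simp add: sum_product mult_single)
  finally have "meval (p * q) x = (\<Sum>a\<in>?P. \<Sum>b\<in>?Q.
      (Poly_Mapping.lookup p a * monom_eval a x) * (Poly_Mapping.lookup q b * monom_eval b x))"
    by (simp add: meval_sum monom_eval_add mult_ac)
  also have "\<dots> = meval p x * meval q x"
    by (simp add: meval_eq_sum_monom_eval sum_product)
  finally show ?thesis .
qed

lemma meval_one: "meval 1 x = 1"
proof -
  have "meval (Poly_Mapping.single 0 1) x = 1" by (simp add: monom_eval_def del: single_one)
  then show ?thesis by simp
qed

lemma comm_ring_hom_meval: "comm_ring_hom (\<lambda>p. meval p x)"
  by unfold_locales (simp_all add: meval_add meval_mult meval_one)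

lemma meval_mvar [simp]: "meval (mvar i) x = x i"
  by (simp add: mvar_def)

lemma meval_at_zero: "meval p (\<lambda>_. 0) = Poly_Mapping.lookup p 0"
  by (simp add: meval_eq_sum_monom_eval monom_eval_at_zero in_keys_iff if_distrib cong: if_cong)

section \<open>Degrees of monomials\<close>

lemma mdeg_superset:
  "finite S \<Longrightarrow> Poly_Mapping.keys a \<subseteq> S \<Longrightarrow> mdeg a = (\<Sum>v\<in>S. Poly_Mapping.lookup a v)"
  unfolding mdeg_def by (rule sum.mono_neutral_left) (auto simp: in_keys_iff)

lemma mdeg_add [simp]: "mdeg (a + b) = mdeg a + mdeg b"
proof -
  let ?S = "Poly_Mapping.keys a \<union> Poly_Mapping.keys b"
  have "mdeg (a + b) = (\<Sum>v\<in>?S. Poly_Mapping.lookup (a + b) v)"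
    using keys_add[of a b] by (intro mdeg_superset) auto
  also have "\<dots> = mdeg a + mdeg b"
    using mdeg_superset[of ?S a] mdeg_superset[of ?S b] by (simp add: lookup_add sum.distrib)
  finally show ?thesis .
qed

lemma mdeg_zero [simp]: "mdeg 0 = 0"
  by (simp add: mdeg_def)

lemma mdeg_single [simp]: "mdeg (Poly_Mapping.single i k) = k"
  by (cases "k = 0") (simp_all add: mdeg_def)

lemma mdeg_sum: "mdeg (sum f S) = (\<Sum>i\<in>S. mdeg (f i))"
  by (induction S rule: infinite_finite_induct) simp_all

lemma mdeg_eq_0_iff: "mdeg a = 0 \<longleftrightarrow> a = 0"
proof
  assume "mdeg a = 0"
  then have "\<forall>i\<in>Poly_Mapping.keys a. Poly_Mapping.lookup a i = 0"
    unfolding mdeg_def by simp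
  then show "a = 0" by (metis keys_eq_empty in_keys_iff ex_in_conv)
qed simp

lemma perm_mono_single [simp]:
  "perm_mono \<sigma> (Poly_Mapping.single i k) = Poly_Mapping.single (\<sigma> i) k"
  by (cases "k = 0") (simp_all add: perm_mono_def)

lemma mdeg_perm_mono [simp]: "mdeg (perm_mono \<sigma> a) = mdeg a"
  by (simp only: perm_mono_def mdeg_sum mdeg_single) (simp add: mdeg_def)

lemma monomial_nonzero_obtains_variable:
  assumes "(a :: 'v \<Rightarrow>\<^sub>0 nat) \<noteq> 0"
  obtains i b where "a = b + Poly_Mapping.single i 1"
proof -
  obtain i where i: "i \<in> Poly_Mapping.keys a" using assms by (metis keys_eq_empty ex_in_conv)
  have "a = (a - Poly_Mapping.single i 1) + Poly_Mapping.single i 1"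
    using i by (intro poly_mapping_eqI)
      (auto simp: lookup_add lookup_minus lookup_single when_def in_keys_iff)
  then show ?thesis by (rule that)
qed

lemma mdeg_split:
  "k \<le> mdeg (a :: 'v \<Rightarrow>\<^sub>0 nat) \<Longrightarrow> \<exists>b c. a = b + c \<and> mdeg c = k"
proof (induction k)
  case 0
  show ?case by (rule exI[of _ a], rule exI[of _ 0]) simp
next
  case (Suc k)
  then obtain b c where bc: "a = b + c" "mdeg c = k" by auto
  with Suc.prems have "b \<noteq> 0" by auto
  then obtain i b' where "b = b' + Poly_Mapping.single i 1"
    by (rule monomial_nonzero_obtains_variable)
  with bc have "a = b' + (c + Poly_Mapping.single i 1) \<and> mdeg (c + Poly_Mapping.single i 1) = Suc k"
    by (simp add: add_ac)
  then show ?case by blast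
qed

lemma finite_mdeg_eq: "finite {\<alpha> :: 'v::finite \<Rightarrow>\<^sub>0 nat. mdeg \<alpha> = N}"
proof (rule finite_subset)
  show "{\<alpha> :: 'v \<Rightarrow>\<^sub>0 nat. mdeg \<alpha> = N} \<subseteq> Poly_Mapping.lookup -` (PiE UNIV (\<lambda>_. {..N}))"
  proof
    fix \<alpha> :: "'v \<Rightarrow>\<^sub>0 nat" assume "\<alpha> \<in> {\<alpha>. mdeg \<alpha> = N}"
    moreover have "Poly_Mapping.lookup \<alpha> v \<le> mdeg \<alpha>" for v
      using mdeg_superset[of UNIV \<alpha>] by (simp add: member_le_sum)
    ultimately show "\<alpha> \<in> Poly_Mapping.lookup -` (PiE UNIV (\<lambda>_. {..N}))" by (simp add: PiE_iff)
  qed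
  have "inj (Poly_Mapping.lookup :: ('v \<Rightarrow>\<^sub>0 nat) \<Rightarrow> _)"
    by (rule injI, rule poly_mapping_eqI) simp
  then show "finite ((Poly_Mapping.lookup :: ('v \<Rightarrow>\<^sub>0 nat) \<Rightarrow> _) -` (PiE UNIV (\<lambda>_. {..N})))"
    by (intro finite_vimageI finite_PiE) auto
qed

lemma mdeg_pigeonhole:
  assumes "mdeg (\<alpha> :: 'v::finite \<Rightarrow>\<^sub>0 nat) = card (UNIV :: 'v set) * d"
  obtains \<beta> j where "\<alpha> = \<beta> + Poly_Mapping.single j d"
proof -
  have "\<exists>j. d \<le> Poly_Mapping.lookup \<alpha> j"
  proof (rule ccontr)
    assume "\<not> (\<exists>j. d \<le> Poly_Mapping.lookup \<alpha> j)"
    then have "(\<Sum>v\<in>UNIV. Poly_Mapping.lookup \<alpha> v) < (\<Sum>v\<in>(UNIV::'v set). d)"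
      by (intro sum_strict_mono) (auto simp: not_le)
    with assms show False using mdeg_superset[of UNIV \<alpha>] by simp
  qed
  then obtain j where "d \<le> Poly_Mapping.lookup \<alpha> j" ..
  then have "\<alpha> = (\<alpha> - Poly_Mapping.single j d) + Poly_Mapping.single j d"
    by (intro poly_mapping_eqI) (auto simp: lookup_add lookup_minus lookup_single when_def)
  then show ?thesis by (rule that)
qed

section \<open>Ideals generated by a family of polynomials\<close>

lemma in_ideal_gen_0: "in_ideal_gen 0 F"
  unfolding in_ideal_gen_def by (rule exI[of _ "{}"]) simp

lemma in_ideal_gen_generator: "q \<in> F \<Longrightarrow> in_ideal_gen q F"
  unfolding in_ideal_gen_def by (rule exI[of _ "{q}"], rule exI[of _ "\<lambda>_. 1"]) simp

lemma in_ideal_gen_add: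
  assumes "in_ideal_gen p F" "in_ideal_gen q F"
  shows "in_ideal_gen (p + q) F"
proof -
  obtain S1 g1 S2 g2 where 1: "finite S1" "S1 \<subseteq> F" "p = (\<Sum>r\<in>S1. g1 r * r)"
    and 2: "finite S2" "S2 \<subseteq> F" "q = (\<Sum>r\<in>S2. g2 r * r)"
    using assms unfolding in_ideal_gen_def by blast
  define g where "g r = (if r \<in> S1 then g1 r else 0) + (if r \<in> S2 then g2 r else 0)" for r
  have "(\<Sum>r\<in>S1 \<union> S2. (if r \<in> S1 then g1 r else 0) * r) = p"
    "(\<Sum>r\<in>S1 \<union> S2. (if r \<in> S2 then g2 r else 0) * r) = q"
    using 1 2 by (auto intro!: sum.mono_neutral_cong_right)
  then have "p + q = (\<Sum>r\<in>S1 \<union> S2. g r * r)"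
    unfolding g_def distrib_right sum.distrib by simp
  with 1 2 show ?thesis unfolding in_ideal_gen_def by blast
qed

lemma in_ideal_gen_mult_left:
  assumes "in_ideal_gen p F"
  shows "in_ideal_gen (r * p) F"
proof -
  obtain S g where S: "finite S" "S \<subseteq> F" and p: "p = (\<Sum>q\<in>S. g q * q)"
    using assms unfolding in_ideal_gen_def by blast
  from p have "r * p = (\<Sum>q\<in>S. (r * g q) * q)"
    by (simp add: sum_distrib_left mult.assoc)
  with S show ?thesis unfolding in_ideal_gen_def by (intro exI[of _ S] exI[of _ "\<lambda>q. r * g q"]) simp
qed

lemma in_ideal_gen_sum: "(\<And>i. i \<in> I \<Longrightarrow> in_ideal_gen (f i) F) \<Longrightarrow> in_ideal_gen (sum f I) F"
proof (induction I rule: infinite_finite_induct)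
  case (insert i I)
  then show ?case by (simp add: in_ideal_gen_add)
qed (simp_all add: in_ideal_gen_0)

lemma meval_eq_0_if_in_ideal_gen:
  assumes "in_ideal_gen p F" "\<forall>q\<in>F. meval q x = 0"
  shows "meval p x = 0"
proof -
  obtain S g where "S \<subseteq> F" "p = (\<Sum>q\<in>S. g q * q)"
    using assms(1) unfolding in_ideal_gen_def by blast
  with assms(2) show ?thesis by (auto simp: meval_sum meval_mult subset_iff intro!: sum.neutral)
qed

lemma in_ideal_gen_vars_iff: "in_ideal_gen p (range mvar) \<longleftrightarrow> Poly_Mapping.lookup p 0 = 0"
proof
  assume "in_ideal_gen p (range mvar)"
  then have "meval p (\<lambda>_. 0) = 0" by (rule meval_eq_0_if_in_ideal_gen) simp
  then show "Poly_Mapping.lookup p 0 = 0" by (simp add: meval_at_zero)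
next
  assume p0: "Poly_Mapping.lookup p 0 = 0"
  have "in_ideal_gen (Poly_Mapping.single m (Poly_Mapping.lookup p m)) (range mvar)"
    if "m \<in> Poly_Mapping.keys p" for m
  proof -
    from that p0 have "m \<noteq> 0" by (auto simp: in_keys_iff)
    then obtain i b where "m = b + Poly_Mapping.single i 1"
      by (rule monomial_nonzero_obtains_variable)
    then have "Poly_Mapping.single m (Poly_Mapping.lookup p m)
        = Poly_Mapping.single b (Poly_Mapping.lookup p m) * mvar i"
      by (simp add: mvar_def mult_single)
    then show ?thesis by (simp add: in_ideal_gen_mult_left in_ideal_gen_generator)
  qed
  then show "in_ideal_gen p (range mvar)"
    by (subst poly_mapping_sum_single) (rule in_ideal_gen_sum)
qed

lemma mdeg_ge_if_in_keys_power:
  assumes "Poly_Mapping.lookup p 0 = 0" "m \<in> Poly_Mapping.keys (p ^ k)"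
  shows "k \<le> mdeg m"
  using assms(2)
proof (induction k arbitrary: m)
  case (Suc k)
  then obtain a b where ab: "m = a + b" "a \<in> Poly_Mapping.keys p" "b \<in> Poly_Mapping.keys (p ^ k)"
    using keys_mult[of p "p ^ k"] by auto
  with assms(1) have "a \<noteq> 0" by (auto simp: in_keys_iff)
  then have "1 \<le> mdeg a" using mdeg_eq_0_iff[of a] by linarith
  with Suc.IH[OF ab(3)] ab(1) show ?case by simp
qed simp

lemma power_in_ideal_gen_if_monomials:
  assumes "\<And>\<gamma>. mdeg \<gamma> = N \<Longrightarrow> in_ideal_gen (Poly_Mapping.single \<gamma> 1) F"
    and "Poly_Mapping.lookup p 0 = 0"
  shows "in_ideal_gen (p ^ N) F"
proof -
  have "in_ideal_gen (Poly_Mapping.single m (Poly_Mapping.lookup (p ^ N) m)) F"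
    if "m \<in> Poly_Mapping.keys (p ^ N)" for m
  proof -
    have "N \<le> mdeg m" using assms(2) that by (rule mdeg_ge_if_in_keys_power)
    then obtain b c where "m = b + c" "mdeg c = N" using mdeg_split by blast
    then show ?thesis
      using assms(1) in_ideal_gen_mult_left[of "Poly_Mapping.single c 1" F
          "Poly_Mapping.single b (Poly_Mapping.lookup (p ^ N) m)"]
      by (simp add: mult_single)
  qed
  then show ?thesis by (subst poly_mapping_sum_single) (rule in_ideal_gen_sum)
qed

lemma in_radical_gen_iff_in_ideal_gen_vars:
  fixes F :: "('v, 'a::idom) mpoly set"
  assumes "\<forall>q\<in>F. Poly_Mapping.lookup q 0 = 0"
    and "\<And>\<gamma>. mdeg \<gamma> = N \<Longrightarrow> in_ideal_gen (Poly_Mapping.single \<gamma> 1) F"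
  shows "in_radical_gen p F \<longleftrightarrow> in_ideal_gen p (range mvar)"
proof
  interpret comm_ring_hom "\<lambda>p. meval p (\<lambda>_. 0)" by (rule comm_ring_hom_meval)
  assume "in_radical_gen p F"
  then obtain k where "in_ideal_gen (p ^ k) F" unfolding in_radical_gen_def ..
  then have "meval (p ^ k) (\<lambda>_. 0) = 0"
    using assms(1) by (intro meval_eq_0_if_in_ideal_gen) (simp_all add: meval_at_zero)
  then have "meval p (\<lambda>_. 0) ^ k = 0" by (simp only: hom_power)
  then show "in_ideal_gen p (range mvar)" by (simp add: in_ideal_gen_vars_iff meval_at_zero)
next
  assume "in_ideal_gen p (range mvar)"
  then show "in_radical_gen p F"
    unfolding in_radical_gen_def in_ideal_gen_vars_iff
    using power_in_ideal_gen_if_monomials[OF assms(2)] by blast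
qed

section \<open>Polynomials in the coefficients\<close>

lemma mvars_add: "mvars (p + q) \<subseteq> mvars p \<union> mvars q"
  unfolding mvars_def using keys_add[of p q] by auto

lemma mvars_mult: "mvars (p * q) \<subseteq> mvars p \<union> mvars q"
proof
  fix v assume "v \<in> mvars (p * q)"
  then obtain m where m: "m \<in> Poly_Mapping.keys (p * q)" "v \<in> Poly_Mapping.keys m"
    unfolding mvars_def by auto
  then obtain a b where ab: "m = a + b" "a \<in> Poly_Mapping.keys p" "b \<in> Poly_Mapping.keys q"
    using keys_mult[of p q] by blast
  from m(2) ab(1) keys_add[of a b] have "v \<in> Poly_Mapping.keys a \<union> Poly_Mapping.keys b" by blast
  with ab(2,3) show "v \<in> mvars p \<union> mvars q" unfolding mvars_def by blast
qed

lemma mvars_sum: "(\<And>i. i \<in> S \<Longrightarrow> mvars (f i) \<subseteq> A) \<Longrightarrow> mvars (sum f S) \<subseteq> A"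
proof (induction S rule: infinite_finite_induct)
  case (insert x S)
  then show ?case using mvars_add[of "f x" "sum f S"] by auto
qed (simp_all add: mvars_def)

lemma mvars_prod: "(\<And>i. i \<in> S \<Longrightarrow> mvars (f i) \<subseteq> A) \<Longrightarrow> mvars (prod f S) \<subseteq> A"
  for f :: "_ \<Rightarrow> ('w, 'a::comm_ring_1) mpoly"
proof (induction S rule: infinite_finite_induct)
  case (insert x S)
  then show ?case using mvars_mult[of "f x" "prod f S"] by auto
qed (simp_all add: mvars_def)

lemma mvars_of_int [simp]: "mvars (of_int k :: ('w, 'a::comm_ring_1) mpoly) = {}"
  by (simp add: mvars_def flip: single_of_int)

lemma mvars_mvar [simp]: "mvars (mvar i :: ('w, 'a::comm_ring_1) mpoly) = {i}"
  by (simp add: mvars_def mvar_def)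

lemma mvars_zero [simp]: "mvars 0 = {}"
  by (simp add: mvars_def)

lemma mvars_det:
  fixes M :: "('w, 'a::comm_ring_1) mpoly mat"
  assumes "M \<in> carrier_mat m m" "\<And>i j. i < m \<Longrightarrow> j < m \<Longrightarrow> mvars (M $$ (i, j)) \<subseteq> A"
  shows "mvars (det M) \<subseteq> A"
  unfolding det_def'[OF assms(1)]
proof (rule mvars_sum)
  fix p assume "p \<in> {p. p permutes {0..<m}}"
  then have "mvars (\<Prod>i = 0..<m. M $$ (i, p i)) \<subseteq> A"
    using assms(2) by (intro mvars_prod) (auto simp: permutes_in_image)
  then show "mvars (signof p * (\<Prod>i = 0..<m. M $$ (i, p i))) \<subseteq> A"
    using mvars_mult[of "signof p" "\<Prod>i = 0..<m. M $$ (i, p i)"] by auto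
qed

lemma det_coefficient_matrix_polynomial:
  fixes \<phi> :: "nat \<Rightarrow> 'm \<Rightarrow> 'm" and \<rho> :: "nat \<Rightarrow> 'm"
  assumes "finite A"
  obtains h :: "('m, 'a::comm_ring_1) mpoly" where "mvars h \<subseteq> A"
    "\<And>c. meval h c = det (mat m m (\<lambda>(r, k).
            Poly_Mapping.lookup (\<Sum>a\<in>A. Poly_Mapping.single (\<phi> k a) (c a)) (\<rho> r)))"
proof -
  define entry where
    "entry r k = (\<Sum>a\<in>A. if \<phi> k a = \<rho> r then mvar a else (0 :: ('m, 'a) mpoly))" for r k
  define h where "h = det (mat m m (\<lambda>(r, k). entry r k))"
  have "mvars (entry r k) \<subseteq> A" for r k
    unfolding entry_def by (rule mvars_sum) auto
  then have "mvars h \<subseteq> A"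
    unfolding h_def by (intro mvars_det[of _ m]) auto
  moreover have "meval h c = det (mat m m (\<lambda>(r, k).
      Poly_Mapping.lookup (\<Sum>a\<in>A. Poly_Mapping.single (\<phi> k a) (c a)) (\<rho> r)))" for c
  proof -
    interpret comm_ring_hom "\<lambda>p. meval p c" by (rule comm_ring_hom_meval)
    have "map_mat (\<lambda>p. meval p c) (mat m m (\<lambda>(r, k). entry r k))
        = mat m m (\<lambda>(r, k). Poly_Mapping.lookup (\<Sum>a\<in>A. Poly_Mapping.single (\<phi> k a) (c a)) (\<rho> r))"
      by (rule eq_matI) (auto simp: entry_def meval_sum lookup_sum lookup_single when_def intro!: sum.cong)
    then show ?thesis unfolding h_def by (metis hom_det)
  qed
  ultimately show ?thesis by (rule that)
qed

section \<open>Monomials in the ideal of a generic family\<close>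

lemma single_in_ideal_gen_if_det_nonzero:
  fixes q :: "nat \<Rightarrow> ('v, 'a::field) mpoly"
  assumes "distinct L"
    and "\<And>k. k < length L \<Longrightarrow> in_ideal_gen (q k) F"
    and "\<And>k. k < length L \<Longrightarrow> Poly_Mapping.keys (q k) \<subseteq> set L"
    and "det (mat (length L) (length L) (\<lambda>(r, k). Poly_Mapping.lookup (q k) (L ! r))) \<noteq> 0"
    and "\<gamma> \<in> set L"
  shows "in_ideal_gen (Poly_Mapping.single \<gamma> 1) F"
proof -
  define m where "m = length L"
  define M where "M = mat m m (\<lambda>(r, k). Poly_Mapping.lookup (q k) (L ! r))"
  have M: "M \<in> carrier_mat m m" by (simp add: M_def)
  from det_non_zero_imp_unit[OF M, unfolded Units_def, of "()"] assms(4)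
  obtain B where B: "B \<in> carrier_mat m m" "M * B = 1\<^sub>m m"
    by (auto simp: ring_mat_def M_def m_def)
  obtain r where r: "r < m" "L ! r = \<gamma>" using assms(5) by (auto simp: m_def in_set_conv_nth)
  define P where "P = (\<Sum>k<m. Poly_Mapping.single 0 (B $$ (k, r)) * q k)"
    \<comment> \<open>its coefficient vector on \<open>L\<close> is column \<open>r\<close> of \<open>M B = 1\<close>\<close>
  have "in_ideal_gen P F"
    unfolding P_def using assms(2) by (intro in_ideal_gen_sum in_ideal_gen_mult_left) (simp add: m_def)
  moreover have "P = Poly_Mapping.single \<gamma> 1"
  proof (rule poly_mapping_eqI)
    fix \<gamma>'
    have lookup_P: "Poly_Mapping.lookup P \<gamma>' = (\<Sum>k<m. B $$ (k, r) * Poly_Mapping.lookup (q k) \<gamma>')"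
      unfolding P_def lookup_sum
      by (intro sum.cong refl) (auto simp flip: mult_map_scale_conv_mult simp: map.rep_eq when_def)
    show "Poly_Mapping.lookup P \<gamma>' = Poly_Mapping.lookup (Poly_Mapping.single \<gamma> 1) \<gamma>'"
    proof (cases "\<gamma>' \<in> set L")
      case True
      then obtain r' where r': "r' < m" "L ! r' = \<gamma>'" by (auto simp: m_def in_set_conv_nth)
      have "Poly_Mapping.lookup P \<gamma>' = (M * B) $$ (r', r)"
        using B(1) r r' by (simp add: lookup_P M_def scalar_prod_def atLeast0LessThan mult.commute)
      also have "\<dots> = (if r' = r then 1 else 0)" using B r r' by simp
      also have "\<dots> = Poly_Mapping.lookup (Poly_Mapping.single \<gamma> 1) \<gamma>'"
        using r r' assms(1) by (auto simp: lookup_single m_def nth_eq_iff_index_eq)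
      finally show ?thesis .
    next
      case False
      then have "Poly_Mapping.lookup (q k) \<gamma>' = 0" if "k < m" for k
        using assms(3)[of k] that by (auto simp: m_def in_keys_iff)
      with False assms(5) show ?thesis by (auto simp: lookup_P lookup_single when_def)
    qed
  qed
  ultimately show ?thesis by simp
qed

text \<open>At \<open>c = e\<^bsub>a\<^sub>0\<^esub>\<close> the coefficient matrix of the polynomials \<open>\<Sum>\<^sub>a c\<^sub>a x\<^bsup>\<phi> k a\<^esup>\<close> is the
  identity, so its determinant is a polynomial in \<open>c\<close> that does not vanish identically.\<close>

lemma general_coeffs_single_in_ideal_gen:
  fixes F :: "(('v \<Rightarrow>\<^sub>0 nat) \<Rightarrow> 'a::field) \<Rightarrow> ('v, 'a) mpoly set"
  assumes "finite A" "distinct L" "a\<^sub>0 \<in> A"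
    and "\<And>k. k < length L \<Longrightarrow> \<phi> k a\<^sub>0 = L ! k"
    and "\<And>k a. k < length L \<Longrightarrow> a \<in> A \<Longrightarrow> \<phi> k a \<in> set L"
    and "\<And>c k. k < length L \<Longrightarrow> in_ideal_gen (\<Sum>a\<in>A. Poly_Mapping.single (\<phi> k a) (c a)) (F c)"
  shows "general_coeffs A (\<lambda>c. \<forall>\<gamma>\<in>set L. in_ideal_gen (Poly_Mapping.single \<gamma> 1) (F c))"
proof -
  define m where "m = length L"
  define q where "q c k = (\<Sum>a\<in>A. Poly_Mapping.single (\<phi> k a) (c a))"
    for c :: "('v \<Rightarrow>\<^sub>0 nat) \<Rightarrow> 'a" and k
  define M where "M c = mat m m (\<lambda>(r, k). Poly_Mapping.lookup (q c k) (L ! r))" for c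
  obtain h :: "('v \<Rightarrow>\<^sub>0 nat, 'a) mpoly" where h: "mvars h \<subseteq> A" "\<And>c. meval h c = det (M c)"
    using det_coefficient_matrix_polynomial[OF assms(1), where m = m and \<phi> = \<phi> and \<rho> = "(!) L"]
    unfolding M_def q_def by blast
  define U where "U = {c \<in> coeff_space A. meval h c \<noteq> 0}"
  have "zariski_open_coeffs A U"
    unfolding zariski_open_coeffs_def U_def using h(1) by (intro conjI exI[of _ "{h}"]) auto
  moreover have "(\<lambda>a. if a = a\<^sub>0 then 1 else 0) \<in> U" (is "?c\<^sub>0 \<in> U")
  proof -
    have "q ?c\<^sub>0 k = Poly_Mapping.single (L ! k) 1" if "k < m" for k
      using assms(1,3,4) that unfolding q_def m_def
      by (simp add: if_distrib[of "Poly_Mapping.single _"] cong: if_cong)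
    then have "M ?c\<^sub>0 = 1\<^sub>m m"
      using assms(2) by (intro eq_matI) (auto simp: M_def lookup_single m_def nth_eq_iff_index_eq)
    then show ?thesis using assms(3) by (simp add: U_def h(2) coeff_space_def)
  qed
  moreover have "\<forall>\<gamma>\<in>set L. in_ideal_gen (Poly_Mapping.single \<gamma> 1) (F c)" if "c \<in> U" for c
  proof
    fix \<gamma> assume "\<gamma> \<in> set L"
    moreover have "Poly_Mapping.keys (q c k) \<subseteq> set L" if "k < length L" for k
      using keys_sum[of "\<lambda>a. Poly_Mapping.single (\<phi> k a) (c a)" A] assms(5)[OF that]
      unfolding q_def by (auto split: if_splits)
    ultimately show "in_ideal_gen (Poly_Mapping.single \<gamma> 1) (F c)"
      using \<open>c \<in> U\<close> assms(2,6)
      by (intro single_in_ideal_gen_if_det_nonzero[of L "q c"]) (auto simp: q_def U_def h(2) M_def m_def)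
  qed
  ultimately show ?thesis unfolding general_coeffs_def by blast
qed

lemma general_coeffs_mono: "general_coeffs A P \<Longrightarrow> (\<And>c. P c \<Longrightarrow> Q c) \<Longrightarrow> general_coeffs A Q"
  unfolding general_coeffs_def by blast

section \<open>Permuted copies of a polynomial with support \<open>A\<close>\<close>

lemma lookup_poly_of_coeffs:
  "finite A \<Longrightarrow> Poly_Mapping.lookup (poly_of_coeffs A c) a = (if a \<in> A then c a else 0)"
  by (simp add: poly_of_coeffs_def mmonom_def lookup_sum lookup_single when_def)

lemma perm_poly_poly_of_coeffs:
  assumes "finite A"
  shows "perm_poly \<sigma> (poly_of_coeffs A c) = (\<Sum>a\<in>A. Poly_Mapping.single (perm_mono \<sigma> a) (c a))"
proof -
  have "perm_poly \<sigma> (poly_of_coeffs A c) = (\<Sum>a\<in>A. Poly_Mapping.single (perm_mono \<sigma> a)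
      (Poly_Mapping.lookup (poly_of_coeffs A c) a))"
    unfolding perm_poly_def using assms
    by (intro sum.mono_neutral_left) (auto simp: in_keys_iff lookup_poly_of_coeffs split: if_splits)
  also have "\<dots> = (\<Sum>a\<in>A. Poly_Mapping.single (perm_mono \<sigma> a) (c a))"
    using assms by (intro sum.cong) (auto simp: lookup_poly_of_coeffs)
  finally show ?thesis .
qed

lemma lookup_perm_poly_poly_of_coeffs_0:
  assumes "finite A" "0 \<notin> A"
  shows "Poly_Mapping.lookup (perm_poly \<sigma> (poly_of_coeffs A c)) 0 = 0"
proof -
  have "perm_mono \<sigma> a \<noteq> 0" if "a \<in> A" for a
    using assms(2) that mdeg_perm_mono[of \<sigma> a] by (metis mdeg_eq_0_iff)
  then show ?thesis
    unfolding perm_poly_poly_of_coeffs[OF assms(1)] lookup_sum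
    by (intro sum.neutral) (auto simp: lookup_single when_def)
qed

lemma general_coeffs_mdeg_single_in_ideal_gen:
  fixes A :: "('v::finite \<Rightarrow>\<^sub>0 nat) set" and G :: "('v \<Rightarrow> 'v) set"
  assumes "finite A" "\<forall>a\<in>A. mdeg a = d" "Poly_Mapping.single i d \<in> A" "\<forall>j. \<exists>\<sigma>\<in>G. \<sigma> i = j"
  shows "general_coeffs A (\<lambda>c :: ('v \<Rightarrow>\<^sub>0 nat) \<Rightarrow> 'a::field.
           \<forall>\<gamma>. mdeg \<gamma> = card (UNIV :: 'v set) * d \<longrightarrow>
             in_ideal_gen (Poly_Mapping.single \<gamma> 1) ((\<lambda>\<sigma>. perm_poly \<sigma> (poly_of_coeffs A c)) ` G))"
proof -
  let ?N = "card (UNIV :: 'v set) * d"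
  obtain L :: "('v \<Rightarrow>\<^sub>0 nat) list" where L: "distinct L" "set L = {\<gamma>. mdeg \<gamma> = ?N}"
    using finite_distinct_list[OF finite_mdeg_eq] by blast
  have "\<exists>\<beta> \<sigma>. \<sigma> \<in> G \<and> \<beta> + Poly_Mapping.single (\<sigma> i) d = \<gamma>" if \<gamma>: "mdeg \<gamma> = ?N" for \<gamma>
  proof -
    obtain \<beta> j where \<beta>: "\<gamma> = \<beta> + Poly_Mapping.single j d" using mdeg_pigeonhole[OF \<gamma>] .
    obtain \<sigma> where \<sigma>: "\<sigma> \<in> G" "\<sigma> i = j" using assms(4) by blast
    show ?thesis using \<beta> \<sigma> by (intro exI[of _ \<beta>] exI[of _ \<sigma>]) simp
  qed
  then obtain \<beta> \<sigma> where \<beta>\<sigma>: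
    "\<And>\<gamma>. mdeg \<gamma> = ?N \<Longrightarrow> \<sigma> \<gamma> \<in> G \<and> \<beta> \<gamma> + Poly_Mapping.single (\<sigma> \<gamma> i) d = \<gamma>"
    by metis
  define \<phi> where "\<phi> k a = \<beta> (L ! k) + perm_mono (\<sigma> (L ! k)) a" for k a
  have "general_coeffs A (\<lambda>c :: _ \<Rightarrow> 'a. \<forall>\<gamma>\<in>set L.
      in_ideal_gen (Poly_Mapping.single \<gamma> 1) ((\<lambda>\<sigma>. perm_poly \<sigma> (poly_of_coeffs A c)) ` G))"
  proof (rule general_coeffs_single_in_ideal_gen[OF assms(1) L(1) assms(3)])
    fix k assume "k < length L"
    then have k: "mdeg (L ! k) = ?N" using L(2) nth_mem by blast
    then show "\<phi> k (Poly_Mapping.single i d) = L ! k"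
      using \<beta>\<sigma>[OF k] by (simp add: \<phi>_def)
    show "\<phi> k a \<in> set L" if "a \<in> A" for a
      using arg_cong[OF conjunct2[OF \<beta>\<sigma>[OF k]], of mdeg] k assms(2) that L(2)
      by (simp add: \<phi>_def)
    show "in_ideal_gen (\<Sum>a\<in>A. Poly_Mapping.single (\<phi> k a) (c a))
        ((\<lambda>\<sigma>. perm_poly \<sigma> (poly_of_coeffs A c)) ` G)" for c :: "_ \<Rightarrow> 'a"
    proof -
      have "(\<Sum>a\<in>A. Poly_Mapping.single (\<phi> k a) (c a))
          = Poly_Mapping.single (\<beta> (L ! k)) 1 * perm_poly (\<sigma> (L ! k)) (poly_of_coeffs A c)"
        by (simp add: \<phi>_def perm_poly_poly_of_coeffs[OF assms(1)] sum_distrib_left mult_single)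
      then show ?thesis
        using \<beta>\<sigma>[OF k] by (simp add: in_ideal_gen_mult_left in_ideal_gen_generator)
    qed
  qed
  then show ?thesis by (rule general_coeffs_mono) (simp add: L(2))
qed

unbundle no m_inv_syntax \<comment> \<open>\<open>inv\<close> below is HOL's inverse function, not HOL-Algebra's\<close>

theorem theorem1p1:
  fixes A :: "('v::finite \<Rightarrow>\<^sub>0 nat) set"
    and G :: "('v \<Rightarrow> 'v) set"
    and d :: nat
    and K_type :: "'a::field itself"
  assumes K_infinite: "infinite (UNIV :: 'a set)"
    and A_fin: "finite A" and A_ne: "A \<noteq> {}"
    and A_hom: "\<forall>a\<in>A. mdeg a = d"
    and d_pos: "d \<ge> 1"
    and A_pow: "\<exists>i. Poly_Mapping.single i d \<in> A"
    and G_perm: "\<forall>\<sigma>\<in>G. bij \<sigma>"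
    and G_id: "id \<in> G"
    and G_comp: "\<forall>\<sigma>\<in>G. \<forall>\<tau>\<in>G. \<sigma> \<circ> \<tau> \<in> G"
    and G_inv: "\<forall>\<sigma>\<in>G. inv \<sigma> \<in> G"
    and G_trans: "\<forall>i j. \<exists>\<sigma>\<in>G. \<sigma> i = j"
  shows "general_coeffs A (\<lambda>c :: ('v \<Rightarrow>\<^sub>0 nat) \<Rightarrow> 'a.
           \<forall>p :: ('v, 'a) mpoly.
             in_radical_gen p ((\<lambda>\<sigma>. perm_poly \<sigma> (poly_of_coeffs A c)) ` G)
             \<longleftrightarrow> in_ideal_gen p (range mvar))"
proof -
  obtain i where i: "Poly_Mapping.single i d \<in> A" using A_pow by blast
  have "0 \<notin> A" using A_hom d_pos by auto
  then have no_constant_term: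
    "\<forall>q\<in>(\<lambda>\<sigma>. perm_poly \<sigma> (poly_of_coeffs A c)) ` G. Poly_Mapping.lookup q 0 = 0" for c :: "_ \<Rightarrow> 'a"
    using A_fin by (auto simp: lookup_perm_poly_poly_of_coeffs_0)
  from A_fin A_hom i G_trans
  have "general_coeffs A (\<lambda>c :: _ \<Rightarrow> 'a. \<forall>\<gamma>. mdeg \<gamma> = card (UNIV :: 'v set) * d \<longrightarrow>
      in_ideal_gen (Poly_Mapping.single \<gamma> 1) ((\<lambda>\<sigma>. perm_poly \<sigma> (poly_of_coeffs A c)) ` G))"
    by (intro general_coeffs_mdeg_single_in_ideal_gen) auto
  then show ?thesis
    by (rule general_coeffs_mono) (use no_constant_term in_radical_gen_iff_in_ideal_gen_vars in blast)
qed

end
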